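(* A category $C$ is Möbius if and only if the following three conditions hold: (1) $\mathrm{PD}_2f$ is finite for every morphism $f$; (2) no identity morphism admits a proper decomposition of length $n\ge2$; (3) if a morphism $f$ fixes some morphism $g$ (i.e. $fg=g$ or $gf=g$), then $f$ is an identity morphism.
   Context: For a morphism $f$ and $n\ge1$, an $n$-decomposition of $f$ is a tuple $(f_1,\dots,f_n)$ of composable morphisms with $f_n\cdots f_1=f$; $\mathrm{D}_nf$ is the set of them. For $n\ge2$, $\mathrm{PD}_nf$ is the set of proper $n$-decompositions (none of the $f_i$ is an identity); $\mathrm{PD}_1f=\{f\}$ and $\mathrm{PD}f=\bigsqcup_{n\ge1}\mathrm{PD}_nf$. A category is Möbius if $\mathrm{PD}f$ is finite for every morphism $f$. *)

theory Defs
  imports Main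
begin

text \<open>A (possibly large) category, given by objects, morphisms, domain, codomain,
identities and composition. \<open>Comp C g f\<close> is the composite g after f (written gf).\<close>

record ('o, 'm) category_data =
  Ob   :: "'o set"
  Mor  :: "'m set"
  Dom  :: "'m \<Rightarrow> 'o"
  Cod  :: "'m \<Rightarrow> 'o"
  Id   :: "'o \<Rightarrow> 'm"
  Comp :: "'m \<Rightarrow> 'm \<Rightarrow> 'm"

definition category :: "('o, 'm) category_data \<Rightarrow> bool" where
  "category C \<longleftrightarrow>
     (\<forall>f\<in>Mor C. Dom C f \<in> Ob C \<and> Cod C f \<in> Ob C) \<and>
     (\<forall>a\<in>Ob C. Id C a \<in> Mor C \<and> Dom C (Id C a) = a \<and> Cod C (Id C a) = a) \<and>
     (\<forall>f\<in>Mor C. \<forall>g\<in>Mor C. Cod C f = Dom C g \<longrightarrow>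
         Comp C g f \<in> Mor C \<and> Dom C (Comp C g f) = Dom C f \<and> Cod C (Comp C g f) = Cod C g) \<and>
     (\<forall>f\<in>Mor C. Comp C (Id C (Cod C f)) f = f \<and> Comp C f (Id C (Dom C f)) = f) \<and>
     (\<forall>f\<in>Mor C. \<forall>g\<in>Mor C. \<forall>h\<in>Mor C. Cod C f = Dom C g \<longrightarrow> Cod C g = Dom C h \<longrightarrow>
         Comp C h (Comp C g f) = Comp C (Comp C h g) f)"

definition is_identity :: "('o, 'm) category_data \<Rightarrow> 'm \<Rightarrow> bool" where
  "is_identity C g \<longleftrightarrow> (\<exists>a\<in>Ob C. g = Id C a)"

text \<open>A tuple \<open>(f\<^sub>1,\<dots>,f\<^sub>n)\<close> is represented by the list \<open>[f\<^sub>1,\<dots>,f\<^sub>n]\<close>;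
  \<open>comp_list C [f\<^sub>1,\<dots>,f\<^sub>n] = f\<^sub>n \<cdots> f\<^sub>1\<close>.\<close>

fun comp_list :: "('o, 'm) category_data \<Rightarrow> 'm list \<Rightarrow> 'm" where
  "comp_list C [] = undefined"
| "comp_list C [f] = f"
| "comp_list C (f # fs) = Comp C (comp_list C fs) f"

definition composable :: "('o, 'm) category_data \<Rightarrow> 'm list \<Rightarrow> bool" where
  "composable C fs \<longleftrightarrow> set fs \<subseteq> Mor C \<and>
     (\<forall>i. Suc i < length fs \<longrightarrow> Cod C (fs ! i) = Dom C (fs ! Suc i))"

definition D :: "('o, 'm) category_data \<Rightarrow> nat \<Rightarrow> 'm \<Rightarrow> 'm list set" where
  "D C n f = {fs. n \<ge> 1 \<and> length fs = n \<and> composable C fs \<and> comp_list C fs = f}"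

definition PD :: "('o, 'm) category_data \<Rightarrow> nat \<Rightarrow> 'm \<Rightarrow> 'm list set" where
  "PD C n f = (if n = 1 then {[f]}
               else {fs \<in> D C n f. n \<ge> 2 \<and> (\<forall>g\<in>set fs. \<not> is_identity C g)})"

definition PD_all :: "('o, 'm) category_data \<Rightarrow> 'm \<Rightarrow> 'm list set" where
  "PD_all C f = (\<Union>n\<in>{1..}. PD C n f)"

definition moebius :: "('o, 'm) category_data \<Rightarrow> bool" where
  "moebius C \<longleftrightarrow> (\<forall>f\<in>Mor C. finite (PD_all C f))"

end

theory Submission
  imports Defs
begin

(* Decompositions are lists; a "proper chain" is a nonempty composable list
   without identities, and every proper chain is a proper decomposition of its
   composite, so in a Moebius category the proper chains with a given
   composite have bounded length.
   Necessity: a proper chain ls that is absorbed by a proper chain ps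
   (comp ls . comp ps = comp ps, or dually) can be repeated arbitrarily often,
   producing arbitrarily long proper chains with the same composite.  Both
   (2) and (3) yield such absorbed loops.
   Sufficiency: by (2) composites of proper chains are never identities, so
   cutting a proper n-decomposition of f at positions 1..n-1 gives elements of
   PD_2 f, pairwise distinct by (3); hence n <= card (PD_2 f) + 1.  Each PD_n f
   is finite by induction on n (split off the first factor), so PD f is a
   finite union of finite sets. *)

lemma cat_comp:
  assumes "category C" "f \<in> Mor C" "g \<in> Mor C" "Cod C f = Dom C g"
  shows "Comp C g f \<in> Mor C \<and> Dom C (Comp C g f) = Dom C f \<and> Cod C (Comp C g f) = Cod C g"
  using assms unfolding category_def by blast

lemma cat_assoc:
  assumes "category C" "f \<in> Mor C" "g \<in> Mor C" "h \<in> Mor C"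
    "Cod C f = Dom C g" "Cod C g = Dom C h"
  shows "Comp C h (Comp C g f) = Comp C (Comp C h g) f"
  using assms unfolding category_def by blast

lemma cat_id_left: "category C \<Longrightarrow> f \<in> Mor C \<Longrightarrow> Comp C (Id C (Cod C f)) f = f"
  unfolding category_def by blast

lemma cat_id_right: "category C \<Longrightarrow> f \<in> Mor C \<Longrightarrow> Comp C f (Id C (Dom C f)) = f"
  unfolding category_def by blast

lemma cat_id:
  "category C \<Longrightarrow> a \<in> Ob C \<Longrightarrow> Id C a \<in> Mor C \<and> Dom C (Id C a) = a \<and> Cod C (Id C a) = a"
  unfolding category_def by blast

lemma composable_Nil [simp]: "composable C []"
  by (simp add: composable_def)

lemma composable_single [simp]: "composable C [f] \<longleftrightarrow> f \<in> Mor C"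
  by (simp add: composable_def)

lemma composable_Cons2 [simp]:
  "composable C (f # g # fs) \<longleftrightarrow> f \<in> Mor C \<and> Cod C f = Dom C g \<and> composable C (g # fs)"
  by (auto simp: composable_def less_Suc_eq_0_disj)

lemma composable_append:
  "composable C (xs @ ys) \<longleftrightarrow> composable C xs \<and> composable C ys \<and>
     (xs \<noteq> [] \<longrightarrow> ys \<noteq> [] \<longrightarrow> Cod C (last xs) = Dom C (hd ys))"
proof (induction xs rule: induct_list012)
  case (2 x)
  then show ?case by (cases ys) auto
qed auto

lemma comp_list_props:
  assumes "category C" "composable C xs" "xs \<noteq> []"
  shows "comp_list C xs \<in> Mor C \<and> Dom C (comp_list C xs) = Dom C (hd xs) \<and>
         Cod C (comp_list C xs) = Cod C (last xs)"
  using assms(2,3)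
proof (induction xs rule: induct_list012)
  case (3 x y zs)
  then show ?case using cat_comp[OF assms(1), of x "comp_list C (y # zs)"] by auto
qed auto

lemma comp_list_append:
  assumes cat: "category C" and "composable C (xs @ ys)" "xs \<noteq> []" "ys \<noteq> []"
  shows "comp_list C (xs @ ys) = Comp C (comp_list C ys) (comp_list C xs)"
  using assms(2-)
proof (induction xs rule: induct_list012)
  case (2 x)
  then show ?case by (cases ys) auto
next
  case (3 x y zs)
  have parts: "composable C (y # zs)" "composable C ys" "x \<in> Mor C" "Cod C x = Dom C y"
    "Cod C (last (y # zs)) = Dom C (hd ys)"
    using "3.prems" composable_append[of C "x # y # zs" ys] by auto
  note yzs = comp_list_props[OF cat parts(1)] and ys = comp_list_props[OF cat parts(2) \<open>ys \<noteq> []\<close>]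
  have "comp_list C ((x # y # zs) @ ys) = Comp C (comp_list C ((y # zs) @ ys)) x" by simp
  also have "\<dots> = Comp C (Comp C (comp_list C ys) (comp_list C (y # zs))) x"
    using "3.IH"(2) "3.prems" parts by (simp add: composable_append)
  also have "\<dots> = Comp C (comp_list C ys) (Comp C (comp_list C (y # zs)) x)"
    using cat_assoc[OF cat parts(3)] yzs ys parts by simp
  finally show ?case by simp
qed simp

definition proper_chain :: "('o, 'm) category_data \<Rightarrow> 'm list \<Rightarrow> bool" where
  "proper_chain C fs \<longleftrightarrow> fs \<noteq> [] \<and> composable C fs \<and> (\<forall>g\<in>set fs. \<not> is_identity C g)"

lemma PD_iff:
  "2 \<le> n \<Longrightarrow> fs \<in> PD C n f \<longleftrightarrow> proper_chain C fs \<and> length fs = n \<and> comp_list C fs = f"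
  by (auto simp: PD_def D_def proper_chain_def)

lemma proper_chain_in_PD_all:
  assumes "proper_chain C fs"
  shows "fs \<in> PD_all C (comp_list C fs)"
proof (cases "length fs = 1")
  case True
  then obtain x where "fs = [x]" by (cases fs) auto
  then show ?thesis by (force simp: PD_all_def PD_def)
next
  case False
  moreover have "fs \<noteq> []" using assms by (simp add: proper_chain_def)
  ultimately have "2 \<le> length fs" by (cases fs) (auto simp: Suc_le_eq)
  with assms have "fs \<in> PD C (length fs) (comp_list C fs)" by (simp add: PD_iff)
  then show ?thesis using \<open>2 \<le> length fs\<close> unfolding PD_all_def by force
qed

lemma proper_chain_append_iff:
  assumes "category C" "xs \<noteq> []" "ys \<noteq> []"
  shows "proper_chain C (xs @ ys) \<longleftrightarrow>
    proper_chain C xs \<and> proper_chain C ys \<and> Cod C (comp_list C xs) = Dom C (comp_list C ys)"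
proof -
  have "composable C xs \<Longrightarrow> composable C ys \<Longrightarrow>
      Cod C (comp_list C xs) = Cod C (last xs) \<and> Dom C (comp_list C ys) = Dom C (hd ys)"
    using comp_list_props[OF assms(1)] assms(2,3) by blast
  then show ?thesis
    using assms(2,3) by (auto simp: proper_chain_def composable_append)
qed

lemma proper_chain_comp_mor:
  "category C \<Longrightarrow> proper_chain C fs \<Longrightarrow> comp_list C fs \<in> Mor C"
  using comp_list_props by (auto simp: proper_chain_def)

lemma proper_chain_single: "proper_chain C [f] \<longleftrightarrow> f \<in> Mor C \<and> \<not> is_identity C f"
  by (simp add: proper_chain_def)

lemma proper_chain_length_bounded:
  assumes "finite (PD_all C h)"
  obtains N where "\<And>fs. proper_chain C fs \<Longrightarrow> comp_list C fs = h \<Longrightarrow> length fs \<le> N"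
proof
  fix fs assume "proper_chain C fs" "comp_list C fs = h"
  then have "fs \<in> PD_all C h" using proper_chain_in_PD_all by blast
  then show "length fs \<le> Max (length ` PD_all C h)"
    using assms by (intro Max_ge) auto
qed

lemma pump_right:
  assumes cat: "category C" and ps: "proper_chain C ps" and ls: "proper_chain C ls"
    and meet: "Cod C (comp_list C ps) = Dom C (comp_list C ls)"
    and absorb: "Comp C (comp_list C ls) (comp_list C ps) = comp_list C ps"
  shows "proper_chain C (ps @ concat (replicate k ls)) \<and>
         comp_list C (ps @ concat (replicate k ls)) = comp_list C ps"
proof (induction k)
  case (Suc k)
  let ?qs = "ps @ concat (replicate k ls)"
  have split: "ps @ concat (replicate (Suc k) ls) = ?qs @ ls"
    by (simp flip: replicate_append_same)
  have ne: "?qs \<noteq> []" "ls \<noteq> []" using ps ls by (auto simp: proper_chain_def)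
  have "proper_chain C (?qs @ ls)"
    using Suc.IH ls meet by (subst proper_chain_append_iff[OF cat ne]) simp
  moreover have "comp_list C (?qs @ ls) = Comp C (comp_list C ls) (comp_list C ?qs)"
    using calculation comp_list_append[OF cat _ ne] unfolding proper_chain_def by blast
  ultimately show ?case using Suc.IH absorb by (simp only: split)
qed (simp add: ps)

lemma pump_left:
  assumes cat: "category C" and ps: "proper_chain C ps" and ls: "proper_chain C ls"
    and meet: "Cod C (comp_list C ls) = Dom C (comp_list C ps)"
    and absorb: "Comp C (comp_list C ps) (comp_list C ls) = comp_list C ps"
  shows "proper_chain C (concat (replicate k ls) @ ps) \<and>
         comp_list C (concat (replicate k ls) @ ps) = comp_list C ps"
proof (induction k)
  case (Suc k)
  let ?qs = "concat (replicate k ls) @ ps"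
  have ne: "ls \<noteq> []" "?qs \<noteq> []" using ps ls by (auto simp: proper_chain_def)
  have "proper_chain C (ls @ ?qs)"
    using Suc.IH ls meet by (subst proper_chain_append_iff[OF cat ne]) simp
  moreover have "comp_list C (ls @ ?qs) = Comp C (comp_list C ?qs) (comp_list C ls)"
    using calculation comp_list_append[OF cat _ ne] unfolding proper_chain_def by blast
  ultimately show ?case using Suc.IH absorb by (simp only: replicate_Suc concat.simps append_assoc)
qed (simp add: ps)

lemma absorbed_loop_infinite_PD:
  assumes cat: "category C" and ps: "proper_chain C ps" and ls: "proper_chain C ls"
    and loop: "(Cod C (comp_list C ps) = Dom C (comp_list C ls) \<and>
                Comp C (comp_list C ls) (comp_list C ps) = comp_list C ps) \<or>
               (Cod C (comp_list C ls) = Dom C (comp_list C ps) \<and>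
                Comp C (comp_list C ps) (comp_list C ls) = comp_list C ps)"
  shows "infinite (PD_all C (comp_list C ps))"
proof
  assume fin: "finite (PD_all C (comp_list C ps))"
  obtain N where bound:
    "\<And>fs. proper_chain C fs \<Longrightarrow> comp_list C fs = comp_list C ps \<Longrightarrow> length fs \<le> N"
    using proper_chain_length_bounded[OF fin] by blast
  have "length ls \<ge> 1" using ls by (cases ls) (auto simp: proper_chain_def)
  then have "Suc N * 1 \<le> Suc N * length ls" by (rule mult_le_mono2)
  then have long: "length (concat (replicate (Suc N) ls)) > N"
    by (simp add: length_concat sum_list_replicate)
  let ?loops = "concat (replicate (Suc N) ls)"
  from loop show False
  proof
    assume "Cod C (comp_list C ps) = Dom C (comp_list C ls) \<and>
            Comp C (comp_list C ls) (comp_list C ps) = comp_list C ps"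
    with pump_right[OF cat ps ls, where k = "Suc N"] bound
    have "length (ps @ ?loops) \<le> N" by blast
    with long show False by simp
  next
    assume "Cod C (comp_list C ls) = Dom C (comp_list C ps) \<and>
            Comp C (comp_list C ps) (comp_list C ls) = comp_list C ps"
    with pump_left[OF cat ps ls, where k = "Suc N"] bound
    have "length (?loops @ ps) \<le> N" by blast
    with long show False by simp
  qed
qed

(* Condition (2) is necessary: a proper decomposition of an identity absorbs itself. *)
lemma moebius_identity_indecomposable:
  assumes cat: "category C" and mo: "moebius C" and a: "a \<in> Ob C" and n: "2 \<le> n"
  shows "PD C n (Id C a) = {}"
proof (rule ccontr)
  assume "PD C n (Id C a) \<noteq> {}"
  then obtain fs where fs: "proper_chain C fs" "comp_list C fs = Id C a"
    using n by (auto simp: PD_iff)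
  have "infinite (PD_all C (Id C a))"
    using absorbed_loop_infinite_PD[OF cat fs(1) fs(1)] fs(2) cat_id[OF cat a]
      cat_id_left[of C "Id C a", OF cat] by simp
  then show False using mo cat_id[OF cat a] by (auto simp: moebius_def)
qed

(* Condition (3) is necessary: a non-identity f fixing g gives the absorbed loop [f] at [g]. *)
lemma moebius_fixer_is_identity:
  assumes cat: "category C" and mo: "moebius C" and f: "f \<in> Mor C" and g: "g \<in> Mor C"
    and fixing: "(Cod C g = Dom C f \<and> Comp C f g = g) \<or> (Cod C f = Dom C g \<and> Comp C g f = g)"
  shows "is_identity C f"
proof (rule ccontr)
  assume nf: "\<not> is_identity C f"
  have ng: "\<not> is_identity C g"
  proof
    assume "is_identity C g"
    then obtain b where b: "b \<in> Ob C" "g = Id C b" by (auto simp: is_identity_def)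
    then have "f = g"
      using fixing cat_id[OF cat b(1)] cat_id_left[OF cat f] cat_id_right[OF cat f] by auto
    with nf \<open>is_identity C g\<close> show False by simp
  qed
  have "infinite (PD_all C g)"
    using absorbed_loop_infinite_PD[of C "[g]" "[f]"] cat f g nf ng fixing
    by (simp add: proper_chain_single)
  then show False using mo g by (simp add: moebius_def)
qed

lemma proper_chain_take:
  assumes "proper_chain C fs" "0 < k"
  shows "proper_chain C (take k fs)"
  using assms composable_append[of C "take k fs" "drop k fs"]
  by (auto simp: proper_chain_def dest: in_set_takeD)

lemma proper_chain_drop:
  assumes "proper_chain C fs" "k < length fs"
  shows "proper_chain C (drop k fs)"
  using assms composable_append[of C "take k fs" "drop k fs"]
  by (auto simp: proper_chain_def dest: in_set_dropD)

lemma proper_chain_comp_not_identity: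
  assumes id_indec: "\<forall>a\<in>Ob C. \<forall>n\<ge>2. PD C n (Id C a) = {}"
    and fs: "proper_chain C fs"
  shows "\<not> is_identity C (comp_list C fs)"
proof
  assume "is_identity C (comp_list C fs)"
  then obtain a where a: "a \<in> Ob C" "comp_list C fs = Id C a" by (auto simp: is_identity_def)
  show False
  proof (cases "length fs = 1")
    case True
    then obtain x where "fs = [x]" by (cases fs) auto
    with fs a show False by (auto simp: proper_chain_def is_identity_def)
  next
    case False
    with fs have "2 \<le> length fs" by (cases fs) (auto simp: proper_chain_def Suc_le_eq)
    with fs a have "fs \<in> PD C (length fs) (Id C a)" by (simp add: PD_iff)
    with id_indec a \<open>2 \<le> length fs\<close> show False by blast
  qed
qed

lemma cut_in_PD2:
  assumes cat: "category C" and id_indec: "\<forall>a\<in>Ob C. \<forall>n\<ge>2. PD C n (Id C a) = {}"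
    and fs: "proper_chain C fs" and k: "0 < k" "k < length fs"
  shows "[comp_list C (take k fs), comp_list C (drop k fs)] \<in> PD C 2 (comp_list C fs)"
proof -
  have ne: "take k fs \<noteq> []" "drop k fs \<noteq> []" using k by auto
  have parts: "proper_chain C (take k fs)" "proper_chain C (drop k fs)"
    "Cod C (comp_list C (take k fs)) = Dom C (comp_list C (drop k fs))"
    using fs proper_chain_append_iff[OF cat ne] by simp_all
  have "comp_list C fs = Comp C (comp_list C (drop k fs)) (comp_list C (take k fs))"
    using comp_list_append[OF cat _ ne] fs by (simp add: proper_chain_def)
  then show ?thesis
    using parts proper_chain_comp_not_identity[OF id_indec] proper_chain_comp_mor[OF cat]
    by (simp add: PD_iff proper_chain_def)
qed

(* Under (2) and the left half of (3), distinct prefixes of a proper chain have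
   distinct composites: otherwise the middle segment would fix the shorter prefix. *)
lemma prefix_composites_distinct:
  assumes cat: "category C" and id_indec: "\<forall>a\<in>Ob C. \<forall>n\<ge>2. PD C n (Id C a) = {}"
    and fixer_id: "\<And>u h. u \<in> Mor C \<Longrightarrow> h \<in> Mor C \<Longrightarrow> Cod C h = Dom C u \<Longrightarrow>
                        Comp C u h = h \<Longrightarrow> is_identity C u"
    and fs: "proper_chain C fs" and ij: "0 < i" "i < j" "j \<le> length fs"
  shows "comp_list C (take i fs) \<noteq> comp_list C (take j fs)"
proof
  assume eq: "comp_list C (take i fs) = comp_list C (take j fs)"
  define u where "u = take (j - i) (drop i fs)"
  have split: "take j fs = take i fs @ u" using ij take_add[of i "j - i" fs] by (simp add: u_def)
  have ne: "take i fs \<noteq> []" "u \<noteq> []" using ij fs by (auto simp: u_def proper_chain_def)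
  have "proper_chain C (take i fs @ u)" using proper_chain_take[OF fs, of j] ij split by simp
  then have u: "proper_chain C u" and pre: "proper_chain C (take i fs)"
    and meet: "Cod C (comp_list C (take i fs)) = Dom C (comp_list C u)"
    using proper_chain_append_iff[OF cat ne] by simp_all
  have "Comp C (comp_list C u) (comp_list C (take i fs)) = comp_list C (take i fs)"
    using comp_list_append[OF cat _ ne] \<open>proper_chain C (take i fs @ u)\<close> eq split
    by (simp add: proper_chain_def)
  then have "is_identity C (comp_list C u)"
    using fixer_id proper_chain_comp_mor[OF cat u] proper_chain_comp_mor[OF cat pre] meet by blast
  with proper_chain_comp_not_identity[OF id_indec u] show False by simp
qed

(* Hence the cuts at positions 1..n-1 of a proper n-decomposition of f are
   n - 1 distinct elements of PD_2 f. *)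
lemma PD_length_bound:
  assumes cat: "category C" and id_indec: "\<forall>a\<in>Ob C. \<forall>n\<ge>2. PD C n (Id C a) = {}"
    and fixer_id: "\<And>u h. u \<in> Mor C \<Longrightarrow> h \<in> Mor C \<Longrightarrow> Cod C h = Dom C u \<Longrightarrow>
                        Comp C u h = h \<Longrightarrow> is_identity C u"
    and fin: "finite (PD C 2 f)" and n: "2 \<le> n" and fs: "fs \<in> PD C n f"
  shows "n \<le> card (PD C 2 f) + 1"
proof -
  have chain: "proper_chain C fs" "length fs = n" "comp_list C fs = f" using fs n by (simp_all add: PD_iff)
  define cut where "cut k = [comp_list C (take k fs), comp_list C (drop k fs)]" for k
  have "cut ` {1..<n} \<subseteq> PD C 2 f"
    using cut_in_PD2[OF cat id_indec chain(1)] chain by (auto simp: cut_def)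
  moreover have "inj_on cut {1..<n}"
  proof (rule linorder_inj_onI)
    fix i j assume "i < j" "i \<in> {1..<n}" "j \<in> {1..<n}"
    then show "cut i \<noteq> cut j"
      using prefix_composites_distinct[OF cat id_indec fixer_id chain(1)] chain(2)
      by (simp add: cut_def)
  qed auto
  ultimately have "card {1..<n} \<le> card (PD C 2 f)"
    using card_inj_on_le fin by blast
  then show ?thesis by simp
qed

(* Under (1) and (2), every PD_n f is finite: a proper (m+1)-decomposition is
   determined by its cut at position 1 in PD_2 f and a proper m-decomposition
   of the second factor of that cut. *)
lemma PD_finite:
  assumes cat: "category C" and PD2_fin: "\<forall>f\<in>Mor C. finite (PD C 2 f)"
    and id_indec: "\<forall>a\<in>Ob C. \<forall>n\<ge>2. PD C n (Id C a) = {}"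
  shows "\<forall>f\<in>Mor C. finite (PD C n f)"
proof (induction n rule: nat_less_induct)
  case (1 n)
  show ?case
  proof (cases "n \<le> 2")
    case True
    then have "n = 0 \<or> n = 1 \<or> n = 2" by auto
    then show ?thesis using PD2_fin by (auto simp: PD_def D_def)
  next
    case False
    then obtain m where n: "n = Suc m" and m: "2 \<le> m" by (cases n) auto
    show ?thesis
    proof
      fix f assume f: "f \<in> Mor C"
      let ?S = "SIGMA p:PD C 2 f. PD C m (p ! 1)"
      have "PD C n f \<subseteq> (\<lambda>(p, rest). hd p # rest) ` ?S"
      proof
        fix fs assume "fs \<in> PD C n f"
        then have chain: "proper_chain C fs" "length fs = Suc m" "comp_list C fs = f"
          using n m by (simp_all add: PD_iff)
        obtain x rest where fs: "fs = x # rest" using chain(2) by (cases fs) auto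
        have "rest \<noteq> []" using chain(2) m fs by auto
        have "[x, comp_list C rest] \<in> PD C 2 f"
          using cut_in_PD2[OF cat id_indec chain(1), of 1] chain \<open>rest \<noteq> []\<close> fs by simp
        moreover have "rest \<in> PD C m (comp_list C rest)"
          using proper_chain_drop[OF chain(1), of 1] chain m fs \<open>rest \<noteq> []\<close> by (simp add: PD_iff)
        ultimately show "fs \<in> (\<lambda>(p, rest). hd p # rest) ` ?S"
          using fs by (auto intro!: image_eqI[where x = "([x, comp_list C rest], rest)"])
      qed
      moreover have "p ! 1 \<in> Mor C" if "p \<in> PD C 2 f" for p
        using that by (auto simp: PD_iff proper_chain_def composable_def numeral_2_eq_2)
      then have "finite ?S" using PD2_fin f "1.IH" n by (intro finite_SigmaI) auto
      ultimately show "finite (PD C n f)" using finite_surj by blast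
    qed
  qed
qed

lemma moebius_if_conditions:
  assumes cat: "category C" and PD2_fin: "\<forall>f\<in>Mor C. finite (PD C 2 f)"
    and id_indec: "\<forall>a\<in>Ob C. \<forall>n\<ge>2. PD C n (Id C a) = {}"
    and fixer_id: "\<And>u h. u \<in> Mor C \<Longrightarrow> h \<in> Mor C \<Longrightarrow> Cod C h = Dom C u \<Longrightarrow>
                        Comp C u h = h \<Longrightarrow> is_identity C u"
  shows "moebius C"
  unfolding moebius_def
proof
  fix f assume f: "f \<in> Mor C"
  let ?N = "card (PD C 2 f)"
  have "PD_all C f \<subseteq> (\<Union>n\<in>{1..?N + 1}. PD C n f)"
  proof
    fix fs assume "fs \<in> PD_all C f"
    then obtain n where n: "1 \<le> n" "fs \<in> PD C n f" by (auto simp: PD_all_def)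
    have "n \<le> ?N + 1"
      using PD_length_bound[OF cat id_indec fixer_id _ _ n(2)] PD2_fin f by (cases "2 \<le> n") auto
    with n show "fs \<in> (\<Union>n\<in>{1..?N + 1}. PD C n f)" by auto
  qed
  moreover have "finite (\<Union>n\<in>{1..?N + 1}. PD C n f)"
    using PD_finite[OF cat PD2_fin id_indec] f by blast
  ultimately show "finite (PD_all C f)" by (rule finite_subset)
qed

theorem theorem7p1:
  fixes C :: "('o, 'm) category_data"
  assumes "category C"
  shows "moebius C \<longleftrightarrow>
    ((\<forall>f\<in>Mor C. finite (PD C 2 f)) \<and>
     (\<forall>a\<in>Ob C. \<forall>n\<ge>2. PD C n (Id C a) = {}) \<and>
     (\<forall>f\<in>Mor C. \<forall>g\<in>Mor C.
        ((Cod C g = Dom C f \<and> Comp C f g = g) \<or> (Cod C f = Dom C g \<and> Comp C g f = g))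
        \<longrightarrow> is_identity C f))" (is "_ \<longleftrightarrow> ?conditions")
proof
  assume mo: "moebius C"
  have "PD C 2 f \<subseteq> PD_all C f" for f unfolding PD_all_def by (intro UN_upper) simp
  then have "\<forall>f\<in>Mor C. finite (PD C 2 f)"
    using mo by (meson finite_subset moebius_def)
  then show ?conditions
    using moebius_identity_indecomposable[OF assms mo]
      moebius_fixer_is_identity[OF assms mo] by blast
next
  assume ?conditions
  then show "moebius C" using moebius_if_conditions[OF assms] by blast
qed

end
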